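(* For every integer $n\geq 3$, $$\gamma_t(C_n\times C_3)=\left\lceil \frac{4n}{5}\right\rceil$$ and $$\gamma_p(C_n\times C_3)=\begin{cases}\left\lceil\frac{4n}{5}\right\rceil, & \text{if } n\equiv 0,2,4 \pmod 5,\\[2pt] \left\lceil\frac{4n}{5}\right\rceil+1, & \text{if } n\equiv 1,3 \pmod 5.\end{cases}$$
   Context: All graphs are finite, simple and undirected. $C_n$ denotes the cycle of order $n$ and $G\times H$ the Cartesian product of graphs. For a graph $G$ without isolated vertices: a set $D\subseteq V(G)$ is a total dominating set if every vertex of $G$ (including those in $D$) has a neighbour in $D$; $\gamma_t(G)$ is the minimum size of a total dominating set. A set $D\subseteq V(G)$ is a paired dominating set if every vertex outside $D$ has a neighbour in $D$ and the induced subgraph $G[D]$ has a perfect matching; $\gamma_p(G)$ is the minimum size of a paired dominating set. *)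

theory Defs
  imports Complex_Main
begin

text \<open>Generic simple graphs: a finite vertex set V with a symmetric irreflexive
  adjacency relation E (only its restriction to V matters).\<close>

definition total_dominating :: "'a set \<Rightarrow> ('a \<Rightarrow> 'a \<Rightarrow> bool) \<Rightarrow> 'a set \<Rightarrow> bool" where
  "total_dominating V E D \<longleftrightarrow> D \<subseteq> V \<and> (\<forall>v\<in>V. \<exists>u\<in>D. E v u)"

definition total_domination_number :: "'a set \<Rightarrow> ('a \<Rightarrow> 'a \<Rightarrow> bool) \<Rightarrow> nat" where
  "total_domination_number V E = Min (card ` {D. total_dominating V E D})"

definition perfect_matching_induced ::
  "('a \<Rightarrow> 'a \<Rightarrow> bool) \<Rightarrow> 'a set \<Rightarrow> 'a set set \<Rightarrow> bool" where
  "perfect_matching_induced E D M \<longleftrightarrow>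
     (\<forall>e\<in>M. \<exists>u v. e = {u, v} \<and> u \<in> D \<and> v \<in> D \<and> u \<noteq> v \<and> E u v) \<and>
     (\<forall>e1\<in>M. \<forall>e2\<in>M. e1 \<noteq> e2 \<longrightarrow> e1 \<inter> e2 = {}) \<and>
     (\<forall>v\<in>D. \<exists>e\<in>M. v \<in> e)"

definition paired_dominating :: "'a set \<Rightarrow> ('a \<Rightarrow> 'a \<Rightarrow> bool) \<Rightarrow> 'a set \<Rightarrow> bool" where
  "paired_dominating V E D \<longleftrightarrow> D \<subseteq> V \<and> (\<forall>v\<in>V - D. \<exists>u\<in>D. E v u) \<and>
     (\<exists>M. perfect_matching_induced E D M)"

definition paired_domination_number :: "'a set \<Rightarrow> ('a \<Rightarrow> 'a \<Rightarrow> bool) \<Rightarrow> nat" where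
  "paired_domination_number V E = Min (card ` {D. paired_dominating V E D})"

definition cycle_adj :: "nat \<Rightarrow> nat \<Rightarrow> nat \<Rightarrow> bool" where
  "cycle_adj n i j \<longleftrightarrow> i < n \<and> j < n \<and> ((i + 1) mod n = j \<or> (j + 1) mod n = i)"

definition cart_adj :: "('a \<Rightarrow> 'a \<Rightarrow> bool) \<Rightarrow> ('b \<Rightarrow> 'b \<Rightarrow> bool) \<Rightarrow> 'a \<times> 'b \<Rightarrow> 'a \<times> 'b \<Rightarrow> bool" where
  "cart_adj E1 E2 x y \<longleftrightarrow>
     (fst x = fst y \<and> E2 (snd x) (snd y)) \<or> (snd x = snd y \<and> E1 (fst x) (fst y))"

abbreviation CnC3_vertices :: "nat \<Rightarrow> (nat \<times> nat) set" where
  "CnC3_vertices n \<equiv> {0..<n} \<times> {0..<3}"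

abbreviation CnC3_adj :: "nat \<Rightarrow> nat \<times> nat \<Rightarrow> nat \<times> nat \<Rightarrow> bool" where
  "CnC3_adj n \<equiv> cart_adj (cycle_adj n) (cycle_adj 3)"

end

theory Submission
  imports Defs
begin

text \<open>
  Read a dominating set \<open>D\<close> of \<open>C\<^sub>n \<times> C\<^sub>3\<close> column by column.  A vertex of column \<open>i\<close> is
  dominated either inside its column or by the vertex in the same row of column \<open>i \<pm> 1\<close>, so
  total domination is a condition on three consecutive columns.  A potential \<open>\<Phi>\<close> of two
  consecutive columns turns this condition into \<open>4 + \<Phi>\<^sub>i \<le> 5 |D\<^sub>i| + \<Phi>\<^sub>i\<^sub>+\<^sub>1\<close>; summed around the
  cycle the potentials cancel and \<open>4n \<le> 5 |D|\<close>.  Conversely, a block of five columns carrying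
  four vertices can be repeated, and short fillers complete it to total and paired dominating
  sets of size \<open>\<lceil>4n/5\<rceil>\<close>, respectively \<open>\<lceil>4n/5\<rceil> + 1\<close> when \<open>n \<equiv> 1, 3 (mod 5)\<close>.  In that case
  \<open>\<lceil>4n/5\<rceil>\<close> is odd, while a paired dominating set has a perfect matching and hence even size.
\<close>

section \<open>Domination in general graphs\<close>

lemma perfect_matching_induced_even_card:
  assumes "finite D" and "perfect_matching_induced E D M"
  shows "even (card D)"
proof -
  note M = assms(2)[unfolded perfect_matching_induced_def]
  have edges: "\<And>e. e \<in> M \<Longrightarrow> e \<subseteq> D \<and> card e = 2"
    using conjunct1[OF M] by fastforce
  have disj: "pairwise disjnt M"
    using conjunct1[OF conjunct2[OF M]] unfolding pairwise_def disjnt_def by blast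
  have "D = \<Union>M" using edges conjunct2[OF conjunct2[OF M]] by blast
  moreover have "finite e" if "e \<in> M" for e
    using edges[OF that] assms(1) finite_subset by blast
  ultimately have "card D = (\<Sum>e\<in>M. card e)" using card_Union_disjoint[OF disj] by simp
  also have "\<dots> = (\<Sum>e\<in>M. 2)" using edges by simp
  finally show ?thesis by simp
qed

lemma perfect_matching_induced_of_involution:
  assumes "\<And>v. v \<in> D \<Longrightarrow> p v \<in> D \<and> p v \<noteq> v \<and> E v (p v) \<and> p (p v) = v"
  shows "perfect_matching_induced E D ((\<lambda>v. {v, p v}) ` D)"
  unfolding perfect_matching_induced_def
proof (intro conjI ballI impI)
  fix e assume "e \<in> (\<lambda>v. {v, p v}) ` D"
  then obtain v where "v \<in> D" and "e = {v, p v}" by blast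
  then have "e = {v, p v} \<and> v \<in> D \<and> p v \<in> D \<and> v \<noteq> p v \<and> E v (p v)"
    using assms[OF \<open>v \<in> D\<close>] by auto
  then show "\<exists>u v. e = {u, v} \<and> u \<in> D \<and> v \<in> D \<and> u \<noteq> v \<and> E u v" by blast
next
  have edge_eq: "e = {x, p x}" if e: "e \<in> (\<lambda>v. {v, p v}) ` D" and x: "x \<in> e" for e x
  proof -
    obtain v where "v \<in> D" and "e = {v, p v}" using e by blast
    then show ?thesis using x assms[OF \<open>v \<in> D\<close>] by auto
  qed
  fix e1 e2
  assume "e1 \<in> (\<lambda>v. {v, p v}) ` D" "e2 \<in> (\<lambda>v. {v, p v}) ` D" and "e1 \<noteq> e2"
  then show "e1 \<inter> e2 = {}" using edge_eq by blast
next
  fix v assume "v \<in> D"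
  then show "\<exists>e\<in>(\<lambda>v. {v, p v}) ` D. v \<in> e" by blast
qed

lemma paired_dominating_imp_total_dominating:
  assumes "symp E" and "paired_dominating V E D"
  shows "total_dominating V E D"
proof -
  obtain M where dom: "D \<subseteq> V" "\<forall>v\<in>V - D. \<exists>u\<in>D. E v u"
    and M: "perfect_matching_induced E D M"
    using assms(2) unfolding paired_dominating_def by blast
  have "\<exists>u\<in>D. E v u" if "v \<in> D" for v
  proof -
    obtain x y where "v \<in> {x, y}" "x \<in> D" "y \<in> D" "E x y"
      using M \<open>v \<in> D\<close> unfolding perfect_matching_induced_def by metis
    then show ?thesis using assms(1) by (auto dest: sympD)
  qed
  with dom show ?thesis unfolding total_dominating_def by blast
qed

lemma total_domination_number_eqI:
  assumes "finite V" and "\<And>D'. total_dominating V E D' \<Longrightarrow> k \<le> card D'"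
    and "total_dominating V E D" and "card D = k"
  shows "total_domination_number V E = k"
  unfolding total_domination_number_def
proof (rule Min_eqI)
  have "{D. total_dominating V E D} \<subseteq> Pow V" by (auto simp: total_dominating_def)
  with assms(1) show "finite (card ` {D. total_dominating V E D})"
    by (meson finite_Pow_iff finite_imageI finite_subset)
qed (use assms in auto)

lemma paired_domination_number_eqI:
  assumes "finite V" and "\<And>D'. paired_dominating V E D' \<Longrightarrow> k \<le> card D'"
    and "paired_dominating V E D" and "card D = k"
  shows "paired_domination_number V E = k"
  unfolding paired_domination_number_def
proof (rule Min_eqI)
  have "{D. paired_dominating V E D} \<subseteq> Pow V" by (auto simp: paired_dominating_def)
  with assms(1) show "finite (card ` {D. paired_dominating V E D})"
    by (meson finite_Pow_iff finite_imageI finite_subset)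
qed (use assms in auto)

section \<open>Columns of the prism\<close>

definition cyc_succ :: "nat \<Rightarrow> nat \<Rightarrow> nat" where
  "cyc_succ n i = Suc i mod n"

definition cyc_pred :: "nat \<Rightarrow> nat \<Rightarrow> nat" where
  "cyc_pred n i = (i + n - 1) mod n"

lemma cyc_succ_less: "i < n \<Longrightarrow> cyc_succ n i < n"
  by (simp add: cyc_succ_def)

lemma cyc_pred_less: "i < n \<Longrightarrow> cyc_pred n i < n"
  by (simp add: cyc_pred_def)

lemma cyc_succ_eq: "i < n \<Longrightarrow> cyc_succ n i = (if i = n - 1 then 0 else i + 1)"
  by (auto simp: cyc_succ_def mod_if)

lemma cyc_pred_eq: "i < n \<Longrightarrow> cyc_pred n i = (if i = 0 then n - 1 else i - 1)"
  by (cases i) (auto simp: cyc_pred_def mod_if)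

lemma cyc_succ_pred: "i < n \<Longrightarrow> cyc_succ n (cyc_pred n i) = i"
  by (auto simp: cyc_succ_eq cyc_pred_eq cyc_pred_less)

lemma cyc_pred_succ: "i < n \<Longrightarrow> cyc_pred n (cyc_succ n i) = i"
  by (auto simp: cyc_succ_eq cyc_pred_eq cyc_succ_less)

lemma bij_betw_cyc_succ: "bij_betw (cyc_succ n) {..<n} {..<n}"
  by (rule bij_betw_byWitness[where f' = "cyc_pred n"])
    (auto simp: cyc_pred_succ cyc_succ_pred cyc_succ_less cyc_pred_less)

lemma cycle_adj_iff:
  assumes "i < n" and "j < n"
  shows "cycle_adj n i j \<longleftrightarrow> j = cyc_succ n i \<or> j = cyc_pred n i"
  using assms cyc_pred_succ[OF assms(2)] cyc_succ_pred[OF assms(1)]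
  unfolding cycle_adj_def by (auto simp: cyc_succ_def)

lemma less_three_iff: "(j::nat) < 3 \<longleftrightarrow> j = 0 \<or> j = 1 \<or> j = 2"
  by auto

lemma cycle_adj_three: "j < 3 \<Longrightarrow> j' < 3 \<Longrightarrow> cycle_adj 3 j j' \<longleftrightarrow> j \<noteq> j'"
  unfolding cycle_adj_def less_three_iff by auto

lemma symp_cycle_adj: "symp (cycle_adj n)"
  by (rule sympI) (auto simp: cycle_adj_def)

lemma symp_cart_adj: "symp E1 \<Longrightarrow> symp E2 \<Longrightarrow> symp (cart_adj E1 E2)"
  by (rule sympI) (auto simp: cart_adj_def dest: sympD)

definition column :: "('a \<times> 'b) set \<Rightarrow> 'a \<Rightarrow> 'b set" where
  "column D i = {j. (i, j) \<in> D}"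

definition column_covered :: "nat set \<Rightarrow> nat set \<Rightarrow> nat set \<Rightarrow> bool" where
  "column_covered a b c \<longleftrightarrow> (\<forall>j<3. j \<in> a \<or> (\<exists>j'\<in>b. j' \<noteq> j) \<or> j \<in> c)"

lemma CnC3_dominated_iff:
  assumes D: "D \<subseteq> CnC3_vertices n" and i: "i < n" and j: "j < 3"
  shows "(\<exists>u\<in>D. CnC3_adj n (i, j) u) \<longleftrightarrow>
    j \<in> column D (cyc_pred n i) \<or> (\<exists>j'\<in>column D i. j' \<noteq> j) \<or> j \<in> column D (cyc_succ n i)"
  (is "?lhs \<longleftrightarrow> ?rhs")
proof
  assume ?lhs
  then obtain a b where ab: "(a, b) \<in> D" and adj: "CnC3_adj n (i, j) (a, b)" by auto
  from ab D have "a < n" "b < 3" by auto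
  then consider "a = i" "b \<noteq> j" | "b = j" "a = cyc_succ n i \<or> a = cyc_pred n i"
    using adj cycle_adj_three[OF j] cycle_adj_iff[OF i] unfolding cart_adj_def by auto
  then show ?rhs by cases (use ab in \<open>auto simp: column_def\<close>)
next
  assume ?rhs
  then consider "(cyc_pred n i, j) \<in> D" | j' where "(i, j') \<in> D" "j' \<noteq> j"
    | "(cyc_succ n i, j) \<in> D"
    unfolding column_def by blast
  then show ?lhs
  proof cases
    case 1
    then show ?thesis using i by (intro bexI[OF _ 1]) (simp add: cart_adj_def cycle_adj_iff cyc_pred_less)
  next
    case (2 j')
    moreover have "j' < 3" using 2 D by auto
    ultimately show ?thesis using j by (intro bexI[OF _ 2(1)]) (simp add: cart_adj_def cycle_adj_three)
  next
    case 3
    then show ?thesis using i by (intro bexI[OF _ 3]) (simp add: cart_adj_def cycle_adj_iff cyc_succ_less)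
  qed
qed

lemma total_dominating_CnC3_iff:
  "total_dominating (CnC3_vertices n) (CnC3_adj n) D \<longleftrightarrow>
     D \<subseteq> CnC3_vertices n \<and>
     (\<forall>i<n. column_covered (column D (cyc_pred n i)) (column D i) (column D (cyc_succ n i)))"
proof (cases "D \<subseteq> CnC3_vertices n")
  case True
  have "(\<forall>v\<in>CnC3_vertices n. \<exists>u\<in>D. CnC3_adj n v u) \<longleftrightarrow>
      (\<forall>i<n. \<forall>j<3. \<exists>u\<in>D. CnC3_adj n (i, j) u)"
    by auto
  also have "\<dots> \<longleftrightarrow>
      (\<forall>i<n. column_covered (column D (cyc_pred n i)) (column D i) (column D (cyc_succ n i)))"
    unfolding column_covered_def using CnC3_dominated_iff[OF True] by (simp add: disj_commute)
  finally show ?thesis using True unfolding total_dominating_def by simp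
qed (simp add: total_dominating_def)

section \<open>The lower bound\<close>

definition potential :: "nat set \<Rightarrow> nat set \<Rightarrow> nat" where
  "potential a b =
     (if a = {} then (if b = {} then 4 else 2 + 2 * card b)
      else if card a = 1 then (if a \<inter> b = {} then 2 else 3)
      else 0)"

lemma potential_le: "potential a b \<le> 4 + 2 * card b"
  by (simp add: potential_def)

lemma potential_step:
  assumes fin: "finite a" "finite c" and b: "b \<subseteq> {..<3}" and cov: "column_covered a b c"
  shows "4 + potential a b \<le> 5 * card b + potential b c"
proof -
  have "finite b" using b finite_subset by blast
  then consider "b = {}" | k where "b = {k}" | "card b \<ge> 2"
    by (metis One_nat_def card_1_singletonE card_0_eq less_2_cases not_le)
  then show ?thesis
  proof cases
    case 1
    then have "{0,1,2} \<subseteq> a \<union> c" using cov by (auto simp: column_covered_def)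
    then have "card {0,1,2::nat} \<le> card (a \<union> c)" using fin by (intro card_mono) auto
    then have "3 \<le> card (a \<union> c)" by simp
    then have "3 \<le> card a + card c" using card_Un_le order_trans by blast
    moreover have "c \<noteq> {} \<Longrightarrow> 0 < card c" using fin(2) by (simp add: card_gt_0_iff)
    ultimately show ?thesis using 1 by (cases "c = {}") (auto simp: potential_def)
  next
    case (2 k)
    then have "a = {} \<Longrightarrow> k \<in> c" using cov b by (auto simp: column_covered_def)
    with 2 show ?thesis by (auto simp: potential_def)
  next
    case 3
    then show ?thesis using potential_le[of a b] by (auto simp: potential_def)
  qed
qed

lemma card_eq_sum_column:
  assumes "D \<subseteq> {0..<n::nat} \<times> B" and "finite B"
  shows "card D = (\<Sum>i<n. card (column D i))"
proof -
  have sigma: "D = Sigma {..<n} (column D)" using assms(1) unfolding column_def by auto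
  have "finite (column D i)" for i
    using assms unfolding column_def by (auto intro: finite_subset[of _ B])
  then have "card (Sigma {..<n} (column D)) = (\<Sum>i<n. card (column D i))"
    by (intro card_SigmaI) auto
  with sigma show ?thesis by metis
qed

lemma CnC3_total_dominating_card_ge:
  assumes "total_dominating (CnC3_vertices n) (CnC3_adj n) D"
  shows "4 * n \<le> 5 * card D"
proof -
  define S where "S = column D"
  define \<Phi> where "\<Phi> i = potential (S (cyc_pred n i)) (S i)" for i
  have D: "D \<subseteq> CnC3_vertices n"
    and cov: "\<forall>i<n. column_covered (S (cyc_pred n i)) (S i) (S (cyc_succ n i))"
    using assms unfolding total_dominating_CnC3_iff S_def by auto
  have S: "S i \<subseteq> {..<3}" for i using D unfolding S_def column_def by auto
  then have fin: "finite (S i)" for i using finite_subset by blast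
  have "4 + \<Phi> i \<le> 5 * card (S i) + \<Phi> (cyc_succ n i)" if "i < n" for i
    using potential_step[OF fin fin S] cov that unfolding \<Phi>_def by (simp add: cyc_pred_succ)
  then have "(\<Sum>i<n. 4 + \<Phi> i) \<le> (\<Sum>i<n. 5 * card (S i) + \<Phi> (cyc_succ n i))"
    by (intro sum_mono) simp
  also have "\<dots> = 5 * card D + (\<Sum>i<n. \<Phi> i)"
    using card_eq_sum_column[OF D] sum.reindex_bij_betw[OF bij_betw_cyc_succ, of \<Phi>]
    by (simp add: sum.distrib sum_distrib_left S_def)
  finally show ?thesis by (simp add: sum.distrib)
qed

section \<open>Periodic constructions\<close>

text \<open>In a paired dominating set the two
  vertices of a \<open>Vert\<close> column are matched with each other, and a \<open>Right2\<close> vertex with the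
  \<open>Left2\<close> vertex of the next column; \<open>Single2\<close> and \<open>Full\<close> only occur in total dominating sets.\<close>

datatype pattern = Blank | Vert01 | Vert02 | Single2 | Right2 | Left2 | Full

fun pattern_rows :: "pattern \<Rightarrow> nat set" where
  "pattern_rows Blank = {}"
| "pattern_rows Vert01 = {0, 1}"
| "pattern_rows Vert02 = {0, 2}"
| "pattern_rows Single2 = {2}"
| "pattern_rows Right2 = {2}"
| "pattern_rows Left2 = {2}"
| "pattern_rows Full = {0, 1, 2}"

definition total_ok :: "pattern \<Rightarrow> pattern \<Rightarrow> pattern \<Rightarrow> bool" where
  "total_ok x y z \<longleftrightarrow> column_covered (pattern_rows x) (pattern_rows y) (pattern_rows z)"

definition paired_ok :: "pattern \<Rightarrow> pattern \<Rightarrow> pattern \<Rightarrow> bool" where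
  "paired_ok x y z \<longleftrightarrow> total_ok x y z \<and> y \<notin> {Single2, Full} \<and>
     (y = Right2 \<longrightarrow> z = Left2) \<and> (y = Left2 \<longrightarrow> x = Right2)"

definition cyclic_all :: "('a \<Rightarrow> 'a \<Rightarrow> 'a \<Rightarrow> bool) \<Rightarrow> 'a list \<Rightarrow> bool" where
  "cyclic_all Q xs \<longleftrightarrow>
     (\<forall>i<length xs. Q (xs ! cyc_pred (length xs) i) (xs ! i) (xs ! cyc_succ (length xs) i))"

definition pattern_set :: "pattern list \<Rightarrow> (nat \<times> nat) set" where
  "pattern_set L = Sigma {..<length L} (\<lambda>i. pattern_rows (L ! i))"

definition pattern_size :: "pattern list \<Rightarrow> nat" where
  "pattern_size L = (\<Sum>c\<leftarrow>L. card (pattern_rows c))"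

lemma pattern_rows_subset: "pattern_rows c \<subseteq> {..<3}"
  by (cases c) auto

lemma pattern_set_subset: "pattern_set L \<subseteq> CnC3_vertices (length L)"
  using pattern_rows_subset by (fastforce simp: pattern_set_def)

lemma column_pattern_set: "i < length L \<Longrightarrow> column (pattern_set L) i = pattern_rows (L ! i)"
  by (auto simp: column_def pattern_set_def)

lemma card_pattern_set: "card (pattern_set L) = pattern_size L"
proof -
  have "finite (pattern_rows c)" for c
    using pattern_rows_subset finite_subset by blast
  then have "card (pattern_set L) = (\<Sum>i<length L. card (pattern_rows (L ! i)))"
    unfolding pattern_set_def by (intro card_SigmaI) auto
  also have "\<dots> = pattern_size L"
    unfolding pattern_size_def sum_list_sum_nth by (simp add: atLeast0LessThan)
  finally show ?thesis .
qed

lemma total_dominating_pattern_set: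
  assumes "cyclic_all total_ok L"
  shows "total_dominating (CnC3_vertices (length L)) (CnC3_adj (length L)) (pattern_set L)"
  unfolding total_dominating_CnC3_iff
  using assms pattern_set_subset
  by (simp add: cyclic_all_def total_ok_def column_pattern_set cyc_pred_less cyc_succ_less)

lemma paired_dominating_pattern_set:
  assumes "cyclic_all paired_ok L"
  shows "paired_dominating (CnC3_vertices (length L)) (CnC3_adj (length L)) (pattern_set L)"
proof -
  define n where "n = length L"
  define p :: "nat \<times> nat \<Rightarrow> nat \<times> nat" where "p = (\<lambda>(i, j). case L ! i of
      Vert01 \<Rightarrow> (i, 1 - j) | Vert02 \<Rightarrow> (i, 2 - j)
    | Right2 \<Rightarrow> (cyc_succ n i, 2) | Left2 \<Rightarrow> (cyc_pred n i, 2) | _ \<Rightarrow> (i, j))"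
  have mem: "(a, b) \<in> pattern_set L \<longleftrightarrow> a < n \<and> b \<in> pattern_rows (L ! a)" for a b
    unfolding pattern_set_def n_def by auto
  have partner: "p x \<in> pattern_set L \<and> p x \<noteq> x \<and> CnC3_adj n x (p x) \<and> p (p x) = x"
    if x_in: "x \<in> pattern_set L" for x
  proof -
    obtain i j where x: "x = (i, j)" "i < n" "j \<in> pattern_rows (L ! i)"
      using x_in mem by (cases x) auto
    have ok: "paired_ok (L ! cyc_pred n i) (L ! i) (L ! cyc_succ n i)"
      using assms x(2) unfolding cyclic_all_def n_def by auto
    show ?thesis
    proof (cases "L ! i")
      case Vert01
      with x have "j = 0 \<or> j = 1" by auto
      then show ?thesis using Vert01 x by (auto simp: p_def mem cart_adj_def cycle_adj_three)
    next
      case Vert02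
      with x have "j = 0 \<or> j = 2" by auto
      then show ?thesis using Vert02 x by (auto simp: p_def mem cart_adj_def cycle_adj_three)
    next
      case Right2
      with x ok have "j = 2" and "L ! cyc_succ n i = Left2" by (auto simp: paired_ok_def)
      moreover have "cyc_succ n i < n" "cycle_adj n i (cyc_succ n i)"
        using x(2) by (simp_all add: cyc_succ_less cycle_adj_iff)
      ultimately show ?thesis using Right2 x
        by (auto simp: p_def mem cart_adj_def cyc_pred_succ)
    next
      case Left2
      with x ok have "j = 2" and "L ! cyc_pred n i = Right2" by (auto simp: paired_ok_def)
      moreover have "cyc_pred n i < n" "cycle_adj n i (cyc_pred n i)"
        using x(2) by (simp_all add: cyc_pred_less cycle_adj_iff)
      ultimately show ?thesis using Left2 x
        by (auto simp: p_def mem cart_adj_def cyc_succ_pred)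
    qed (use x ok in \<open>auto simp: paired_ok_def\<close>)
  qed
  have "cyclic_all total_ok L"
    using assms by (simp add: cyclic_all_def paired_ok_def)
  then have "total_dominating (CnC3_vertices n) (CnC3_adj n) (pattern_set L)"
    unfolding n_def by (rule total_dominating_pattern_set)
  moreover have "perfect_matching_induced (CnC3_adj n) (pattern_set L) ((\<lambda>v. {v, p v}) ` pattern_set L)"
    using partner by (rule perfect_matching_induced_of_involution)
  ultimately show ?thesis
    unfolding paired_dominating_def total_dominating_def n_def by blast
qed

lemma cyclic_all_repeat_block:
  assumes len: "2 \<le> length B" and B: "cyclic_all Q B" and BR: "cyclic_all Q (B @ R)"
  shows "cyclic_all Q (B @ B @ R)"
proof -
  define k where "k = length B"
  define L where "L = B @ R"
  define m where "m = length L"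
  have "2 \<le> k" "k \<le> m" using len by (simp_all add: k_def m_def L_def)
  have B': "Q (B ! cyc_pred k i) (B ! i) (B ! cyc_succ k i)" if "i < k" for i
    using B that unfolding cyclic_all_def k_def by blast
  have L': "Q (L ! cyc_pred m i) (L ! i) (L ! cyc_succ m i)" if "i < m" for i
    using BR that unfolding cyclic_all_def L_def m_def by blast
  have nth_low: "(B @ L) ! j = B ! (j mod k)" if "j \<le> k + 1" for j
    using that \<open>2 \<le> k\<close> by (auto simp: nth_append L_def k_def le_Suc_eq mod_Suc)
  have nth_high: "(B @ L) ! j = L ! (j - k)" if "k \<le> j" for j
    using that by (simp add: nth_append k_def)
  have "Q ((B @ L) ! cyc_pred (m + k) i) ((B @ L) ! i) ((B @ L) ! cyc_succ (m + k) i)"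
    if i: "i < m + k" for i
  proof -
    consider "i = 0" | "1 \<le> i" "i \<le> k" | "k < i" by linarith
    then show ?thesis
    proof cases
      case 1
      have "(B @ L) ! (m + k - 1) = L ! (m - 1)"
        using nth_high[of "m + k - 1"] \<open>2 \<le> k\<close> \<open>k \<le> m\<close> by simp
      moreover have "(B @ L) ! 0 = L ! 0" "(B @ L) ! 1 = L ! 1"
        using \<open>2 \<le> k\<close> unfolding L_def k_def by (auto simp: nth_append)
      ultimately show ?thesis
        using L'[of 0] 1 \<open>2 \<le> k\<close> \<open>k \<le> m\<close> by (simp add: cyc_pred_eq cyc_succ_eq)
    next
      case 2
      have "cyc_pred k (i mod k) = (i - 1) mod k" "cyc_succ k (i mod k) = (i + 1) mod k"
        using 2 \<open>2 \<le> k\<close> by (auto simp: cyc_pred_eq cyc_succ_eq le_less mod_Suc)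
      moreover have "cyc_pred (m + k) i = i - 1" "cyc_succ (m + k) i = i + 1"
        using 2 \<open>2 \<le> k\<close> \<open>k \<le> m\<close> by (simp_all add: cyc_pred_eq cyc_succ_eq)
      moreover have "i mod k < k" using \<open>2 \<le> k\<close> by simp
      ultimately show ?thesis using B'[of "i mod k"] 2 by (simp add: nth_low)
    next
      case 3
      have "(B @ L) ! cyc_succ (m + k) i = L ! cyc_succ m (i - k)"
      proof (cases "i = m + k - 1")
        case True
        then show ?thesis using 3 \<open>2 \<le> k\<close> \<open>k \<le> m\<close>
          unfolding L_def k_def by (simp add: cyc_succ_eq nth_append)
      next
        case False
        then show ?thesis using 3 i by (auto simp: cyc_succ_eq nth_high Suc_diff_le)
      qed
      then show ?thesis using L'[of "i - k"] 3 i
        by (simp add: cyc_pred_eq nth_high)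
    qed
  qed
  then show ?thesis unfolding cyclic_all_def L_def m_def k_def by (simp add: add.commute)
qed

lemma periodic_pattern_exists:
  assumes B: "length B = k" "2 \<le> k" "cyclic_all Q B"
    and step: "\<And>m. t (m + k) = pattern_size B + t m"
    and base: "\<And>m. k \<le> m \<Longrightarrow> m < 2 * k \<Longrightarrow>
      \<exists>R. length (B @ R) = m \<and> cyclic_all Q (B @ R) \<and> pattern_size (B @ R) = t m"
    and "k \<le> m"
  shows "\<exists>R. length (B @ R) = m \<and> cyclic_all Q (B @ R) \<and> pattern_size (B @ R) = t m"
  using \<open>k \<le> m\<close>
proof (induction m rule: less_induct)
  case (less m)
  show ?case
  proof (cases "m < 2 * k")
    case True
    with less.prems base show ?thesis by blast
  next
    case False
    then have "k \<le> m - k" and "m - k < m" using B(2) by auto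
    then obtain R where R: "length (B @ R) = m - k" "cyclic_all Q (B @ R)"
        "pattern_size (B @ R) = t (m - k)"
      using less.IH by blast
    moreover have "t m = pattern_size B + t (m - k)"
      using step[of "m - k"] False by simp
    moreover have "cyclic_all Q (B @ B @ R)"
      using cyclic_all_repeat_block B R(2) by blast
    ultimately show ?thesis using False B(1)
      by (intro exI[of _ "B @ R"]) (auto simp: pattern_size_def)
  qed
qed

lemma cyclic_all_iff_list_all:
  "cyclic_all Q xs \<longleftrightarrow>
     list_all (\<lambda>i. Q (xs ! cyc_pred (length xs) i) (xs ! i) (xs ! cyc_succ (length xs) i))
       [0..<length xs]"
  unfolding cyclic_all_def list_all_iff by auto

lemma all_less_three: "(\<forall>j<3. P j) \<longleftrightarrow> P (0::nat) \<and> P 1 \<and> P 2"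
  by (auto simp: numeral_3_eq_3 numeral_2_eq_2 less_Suc_eq)

lemma column_covered_iff:
  "column_covered a b c \<longleftrightarrow>
     (0 \<in> a \<or> (\<exists>j\<in>b. j \<noteq> 0) \<or> 0 \<in> c) \<and>
     (1 \<in> a \<or> (\<exists>j\<in>b. j \<noteq> 1) \<or> 1 \<in> c) \<and>
     (2 \<in> a \<or> (\<exists>j\<in>b. j \<noteq> 2) \<or> 2 \<in> c)"
  unfolding column_covered_def all_less_three by simp

lemmas pattern_eval = cyclic_all_iff_list_all upt_rec cyc_pred_def cyc_succ_def
  total_ok_def paired_ok_def column_covered_iff pattern_size_def

definition four_fifths_ceil :: "nat \<Rightarrow> nat" where
  "four_fifths_ceil n = (4 * n + 4) div 5"

lemma four_fifths_ceil_add_5 [simp]: "four_fifths_ceil (n + 5) = four_fifths_ceil n + 4"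
  unfolding four_fifths_ceil_def by simp

lemma nat_ceiling_four_fifths: "nat \<lceil>4 * real n / 5\<rceil> = four_fifths_ceil n"
proof -
  have "\<lceil>4 * real n / 5\<rceil> = int (four_fifths_ceil n)"
    unfolding four_fifths_ceil_def by (rule ceiling_unique) linarith+
  then show ?thesis by simp
qed

text \<open>The least even number \<open>\<ge> four_fifths_ceil n\<close>.\<close>

definition four_fifths_ceil_even :: "nat \<Rightarrow> nat" where
  "four_fifths_ceil_even n =
     (if n mod 5 \<in> {0, 2, 4} then four_fifths_ceil n else four_fifths_ceil n + 1)"

lemma four_fifths_ceil_even_add_5 [simp]:
  "four_fifths_ceil_even (n + 5) = four_fifths_ceil_even n + 4"
  unfolding four_fifths_ceil_even_def by simp

lemma odd_four_fifths_ceil: "n mod 5 \<notin> {0, 2, 4} \<Longrightarrow> odd (four_fifths_ceil n)"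
proof -
  assume "n mod 5 \<notin> {0, 2, 4}"
  moreover have "n mod 5 < 5" by simp
  ultimately have "n mod 5 = 1 \<or> n mod 5 = 3" by auto
  then show ?thesis unfolding four_fifths_ceil_def by presburger
qed

lemma total_pattern_exists:
  assumes "3 \<le> n"
  shows "\<exists>L. length L = n \<and> cyclic_all total_ok L \<and> pattern_size L = four_fifths_ceil n"
proof -
  note eval = pattern_eval four_fifths_ceil_def
  consider "n = 3" | "n = 4" | "5 \<le> n" using assms by linarith
  then show ?thesis
  proof cases
    case 1
    show ?thesis by (rule exI[of _ "[Blank, Blank, Full]"]) (simp add: 1 eval)
  next
    case 2
    show ?thesis by (rule exI[of _ "[Blank, Vert01, Blank, Vert02]"]) (simp add: 2 eval)
  next
    case 3
    let ?B = "[Blank, Vert01, Blank, Single2, Single2]"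
    have "\<exists>R. length (?B @ R) = n \<and> cyclic_all total_ok (?B @ R) \<and>
        pattern_size (?B @ R) = four_fifths_ceil n"
    proof (rule periodic_pattern_exists[where t = four_fifths_ceil and k = 5])
      fix m
      assume "5 \<le> m" and "m < 2 * (5::nat)"
      then have "m \<in> {5, 6, 7, 8, 9}" by auto
      then show "\<exists>R. length (?B @ R) = m \<and> cyclic_all total_ok (?B @ R) \<and>
          pattern_size (?B @ R) = four_fifths_ceil m"
        by (elim insertE emptyE; intro exI[of _ "replicate (m - 5) Single2"])
          (simp_all add: eval sum_list_replicate)
    qed (use 3 in \<open>simp_all add: pattern_eval pattern_size_def\<close>)
    then show ?thesis by blast
  qed
qed

lemma paired_pattern_exists:
  assumes "3 \<le> n"
  shows "\<exists>L. length L = n \<and> cyclic_all paired_ok L \<and> pattern_size L = four_fifths_ceil_even n"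
proof -
  note eval = pattern_eval four_fifths_ceil_even_def four_fifths_ceil_def
  consider "n = 3" | "n = 4" | "5 \<le> n" using assms by linarith
  then show ?thesis
  proof cases
    case 1
    show ?thesis by (rule exI[of _ "[Blank, Vert01, Vert02]"]) (simp add: 1 eval)
  next
    case 2
    show ?thesis by (rule exI[of _ "[Blank, Vert01, Blank, Vert02]"]) (simp add: 2 eval)
  next
    case 3
    let ?B = "[Blank, Vert01, Blank, Right2, Left2]"
    have "\<exists>R. length (?B @ R) = n \<and> cyclic_all paired_ok (?B @ R) \<and>
        pattern_size (?B @ R) = four_fifths_ceil_even n"
    proof (rule periodic_pattern_exists[where t = four_fifths_ceil_even and k = 5])
      fix m
      assume "5 \<le> m" and "m < 2 * (5::nat)"
      then consider "m = 5" | "m = 6" | "m = 7" | "m = 8" | "m = 9" by force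
      then show "\<exists>R. length (?B @ R) = m \<and> cyclic_all paired_ok (?B @ R) \<and>
          pattern_size (?B @ R) = four_fifths_ceil_even m"
      proof cases
        case 1
        show ?thesis by (rule exI[of _ "[]"]) (simp add: 1 eval)
      next
        case 2
        show ?thesis by (rule exI[of _ "[Vert02]"]) (simp add: 2 eval)
      next
        case 3
        show ?thesis by (rule exI[of _ "[Right2, Left2]"]) (simp add: 3 eval)
      next
        case 4
        show ?thesis by (rule exI[of _ "[Blank, Vert01, Vert02]"]) (simp add: 4 eval)
      next
        case 5
        show ?thesis by (rule exI[of _ "[Blank, Vert01, Blank, Vert02]"]) (simp add: 5 eval)
      qed
    qed (use 3 in \<open>simp_all add: pattern_eval pattern_size_def\<close>)
    then show ?thesis by blast
  qed
qed

lemma total_domination_number_CnC3: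
  assumes "3 \<le> n"
  shows "total_domination_number (CnC3_vertices n) (CnC3_adj n) = four_fifths_ceil n"
proof -
  obtain L where L: "length L = n" "cyclic_all total_ok L" "pattern_size L = four_fifths_ceil n"
    using total_pattern_exists[OF assms] by blast
  show ?thesis
  proof (rule total_domination_number_eqI)
    show "four_fifths_ceil n \<le> card D" if "total_dominating (CnC3_vertices n) (CnC3_adj n) D" for D
      using CnC3_total_dominating_card_ge[OF that] unfolding four_fifths_ceil_def by linarith
    show "total_dominating (CnC3_vertices n) (CnC3_adj n) (pattern_set L)"
      using total_dominating_pattern_set[OF L(2)] L(1) by simp
  qed (use L(3) card_pattern_set in auto)
qed

lemma paired_domination_number_CnC3:
  assumes "3 \<le> n"
  shows "paired_domination_number (CnC3_vertices n) (CnC3_adj n) = four_fifths_ceil_even n"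
proof -
  obtain L where L: "length L = n" "cyclic_all paired_ok L" "pattern_size L = four_fifths_ceil_even n"
    using paired_pattern_exists[OF assms] by blast
  show ?thesis
  proof (rule paired_domination_number_eqI)
    fix D assume D: "paired_dominating (CnC3_vertices n) (CnC3_adj n) D"
    then have "4 * n \<le> 5 * card D"
      by (intro CnC3_total_dominating_card_ge paired_dominating_imp_total_dominating
          symp_cart_adj symp_cycle_adj)
    then have "four_fifths_ceil n \<le> card D" unfolding four_fifths_ceil_def by linarith
    moreover have "even (card D)"
    proof -
      obtain M where "perfect_matching_induced (CnC3_adj n) D M" "D \<subseteq> CnC3_vertices n"
        using D unfolding paired_dominating_def by blast
      then show ?thesis by (meson finite_SigmaI finite_atLeastLessThan finite_subset
            perfect_matching_induced_even_card)
    qed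
    ultimately show "four_fifths_ceil_even n \<le> card D"
      using odd_four_fifths_ceil[of n] unfolding four_fifths_ceil_even_def
      by (auto simp: Suc_le_eq order_le_less)
  next
    show "paired_dominating (CnC3_vertices n) (CnC3_adj n) (pattern_set L)"
      using paired_dominating_pattern_set[OF L(2)] L(1) by simp
  qed (use L(3) card_pattern_set in auto)
qed

theorem theorem3p1:
  fixes n :: nat
  assumes "n \<ge> 3"
  shows "(total_domination_number (CnC3_vertices n) (CnC3_adj n) = nat \<lceil>4 * real n / 5\<rceil>) \<and>
         (paired_domination_number (CnC3_vertices n) (CnC3_adj n) =
           (if n mod 5 \<in> {0, 2, 4} then nat \<lceil>4 * real n / 5\<rceil>
            else nat \<lceil>4 * real n / 5\<rceil> + 1))"
  using total_domination_number_CnC3[OF assms] paired_domination_number_CnC3[OF assms]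
  by (simp add: nat_ceiling_four_fifths four_fifths_ceil_even_def)

end
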